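(* Assume $L$ is irreducible. Then $$R\ge\frac{\lambda_2}{\mu_m^2}UU,\qquad L^\top L\ge\frac{\gamma_2}{\mu_m^2}UU,\qquad \frac{\lambda_m}{\gamma_2}L^\top L\ge R\ge\frac{\lambda_2}{\rho(L^\top L)}L^\top L,$$ where $M\ge N$ means $M-N$ is positive semidefinite.
   Context: $L=D-\mathcal A$ is the Laplacian of a weighted directed graph on $m$ agents ($\mathcal A=(a_{ij})$ nonnegative with zero diagonal, $D$ the diagonal matrix of row sums of $\mathcal A$). For irreducible $L$, $\xi$ is the positive vector with $\xi^\top L=0$ and $\sum_i\xi_i=1$, $\Xi=\mathrm{diag}(\xi)$. $R=\frac12(\Xi L+L^\top\Xi)$ with eigenvalues $0=\lambda_1<\lambda_2\le\dots\le\lambda_m$; $U=\Xi-\xi\xi^\top$ with eigenvalues $0=\mu_1<\mu_2\le\dots\le\mu_m$; $L^\top L$ with eigenvalues $0=\gamma_1<\gamma_2\le\dots\le\gamma_m=\rho(L^\top L)$, $\rho$ the spectral radius. *)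

theory Defs
  imports "HOL-Analysis.Analysis" "HOL-Computational_Algebra.Polynomial"
begin

definition laplacian :: "real^'n^'n \<Rightarrow> real^'n^'n" where
  "laplacian A = (\<chi> i j. if i = j then (\<Sum>k\<in>UNIV. A $ i $ k) else 0) - A"

(* irreducible: the directed graph with an edge i -> j whenever i \<noteq> j and M_ij \<noteq> 0
   is strongly connected *)
definition irreducible_mat :: "real^'n^'n \<Rightarrow> bool" where
  "irreducible_mat M \<longleftrightarrow> (\<forall>i j. (i, j) \<in> {(i, j). i \<noteq> j \<and> M $ i $ j \<noteq> 0}\<^sup>+)"

definition diag_vec :: "real^'n \<Rightarrow> real^'n^'n" where
  "diag_vec v = (\<chi> i j. if i = j then v $ i else 0)"

definition outer_prod :: "real^'n \<Rightarrow> real^'n \<Rightarrow> real^'n^'n" where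
  "outer_prod u v = (\<chi> i j. u $ i * v $ j)"

definition charpoly :: "real^'n^'n \<Rightarrow> real poly" where
  "charpoly A = det ((\<chi> i j. if i = j then [:0, 1:] else 0) - (\<chi> i j. [:A $ i $ j:]))"

definition eig_count :: "real^'n^'n \<Rightarrow> real \<Rightarrow> nat" where
  "eig_count A t = (\<Sum>r\<in>{r. poly (charpoly A) r = 0 \<and> r \<le> t}. order r (charpoly A))"

(* k-th smallest eigenvalue (k = 1, ..., n), counted with multiplicity *)
definition eigval :: "nat \<Rightarrow> real^'n^'n \<Rightarrow> real" where
  "eigval k A = Inf {t. k \<le> eig_count A t}"

definition spectral_radius :: "real^'n^'n \<Rightarrow> real" where
  "spectral_radius A = Sup {cmod z | z. poly (map_poly complex_of_real (charpoly A)) z = 0}"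

definition loewner_ge :: "real^'n^'n \<Rightarrow> real^'n^'n \<Rightarrow> bool" where
  "loewner_ge M N \<longleftrightarrow> (\<forall>x. 0 \<le> x \<bullet> ((M - N) *v x))"

definition R_mat :: "real^'n \<Rightarrow> real^'n^'n \<Rightarrow> real^'n^'n" where
  "R_mat \<xi> L = (1/2) *\<^sub>R (diag_vec \<xi> ** L + transpose L ** diag_vec \<xi>)"

definition U_mat :: "real^'n \<Rightarrow> real^'n^'n" where
  "U_mat \<xi> = diag_vec \<xi> - outer_prod \<xi> \<xi>"

end

theory Submission
  imports Defs
begin

text \<open>
  The matrices \<open>R\<close>, \<open>L\<^sup>T L\<close>, \<open>U\<close> and \<open>U U\<close> are symmetric, positive semidefinite
  and annihilate the all-ones vector \<open>1\<close>, so every Loewner inequality between them only has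
  to be checked on vectors \<open>y \<bottom> 1\<close>. By the spectral theorem, on such vectors the quadratic
  form of each of \<open>R\<close>, \<open>L\<^sup>T L\<close> lies between its second-smallest eigenvalue and its
  largest eigenvalue (or spectral radius) times \<open>\<parallel>y\<parallel>\<^sup>2\<close>, and \<open>\<parallel>U y\<parallel>\<^sup>2 \<le> \<mu>\<^sub>m\<^sup>2 \<parallel>y\<parallel>\<^sup>2\<close>;
  chaining two such bounds through \<open>\<parallel>y\<parallel>\<^sup>2\<close> gives each inequality. The third one divides
  by \<open>\<gamma>\<^sub>2\<close>, which is positive because irreducibility forces the kernel of \<open>L\<close>, hence
  of \<open>L\<^sup>T L\<close>, to consist of constant vectors. The spectral theorem itself is obtained by
  maximising the Rayleigh quotient on invariant subspaces.
\<close>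

section \<open>Spectral theorem for real symmetric matrices\<close>

lemma inner_symmetric_matrix:
  fixes S :: "real^'n^'n"
  assumes "transpose S = S"
  shows "x \<bullet> (S *v y) = (S *v x) \<bullet> y"
  by (metis assms dot_lmul_matrix transpose_matrix_vector)

lemma inner_transpose_matrix_vector:
  fixes M :: "real^'n^'m"
  shows "x \<bullet> (transpose M *v z) = (M *v x) \<bullet> z"
  by (metis dot_lmul_matrix inner_commute transpose_matrix_vector)

lemma quadratic_nonpos_imp_linear_coeff_zero:
  fixes a b :: real
  assumes nonpos: "\<And>t. 2 * t * a + t\<^sup>2 * b \<le> 0" and "b \<le> 0"
  shows "a = 0"
proof -
  define t where "t = a / (1 - b)"
  have pos: "0 < 1 - b" using \<open>b \<le> 0\<close> by simp
  then have "t * (1 - b) = a" by (simp add: t_def)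
  have "(1 - b)\<^sup>2 * (2 * t * a + t\<^sup>2 * b) = 2 * a * (t * (1 - b)) * (1 - b) + (t * (1 - b))\<^sup>2 * b"
    by (simp add: power2_eq_square algebra_simps)
  also have "\<dots> = a\<^sup>2 * (2 - b)"
    unfolding \<open>t * (1 - b) = a\<close> by (simp add: power2_eq_square algebra_simps)
  finally have "a\<^sup>2 * (2 - b) \<le> 0"
    using nonpos[of t] by (metis mult_nonneg_nonpos zero_le_power2)
  with \<open>b \<le> 0\<close> have "a\<^sup>2 \<le> 0" by (simp add: mult_le_0_iff)
  then show "a = 0" by simp
qed

lemma subspace_rayleigh_maximizer:
  fixes S :: "real^'n^'n" and W :: "(real^'n) set"
  assumes "subspace W" and "W \<noteq> {0}"
  obtains u where "u \<in> W" "u \<bullet> u = 1"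
    "\<And>y. y \<in> W \<Longrightarrow> y \<bullet> (S *v y) \<le> (u \<bullet> (S *v u)) * (y \<bullet> y)"
proof -
  define f where "f y = y \<bullet> (S *v y)" for y
  define K where "K = W \<inter> sphere 0 1"
  have "compact K"
    unfolding K_def using closed_subspace[OF \<open>subspace W\<close>] compact_sphere
    by (metis compact_Int_closed inf_commute)
  obtain z where "z \<in> W" "z \<noteq> 0" using assms subspace_0 by blast
  then have "(1 / norm z) *\<^sub>R z \<in> K"
    by (simp add: K_def subspace_scale[OF \<open>subspace W\<close>])
  then have "K \<noteq> {}" by blast
  moreover have "continuous_on K f"
    unfolding f_def by (intro continuous_intros matrix_vector_mult_linear_continuous_on)
  ultimately obtain u where "u \<in> K" and umax: "\<And>y. y \<in> K \<Longrightarrow> f y \<le> f u"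
    using continuous_attains_sup[OF \<open>compact K\<close>] by blast
  have "f y \<le> f u * (y \<bullet> y)" if "y \<in> W" for y
  proof (cases "y = 0")
    case False
    then have "(1 / norm y) *\<^sub>R y \<in> K"
      by (simp add: K_def subspace_scale[OF \<open>subspace W\<close> that])
    moreover have "f ((1 / norm y) *\<^sub>R y) = f y / (norm y)\<^sup>2"
      by (simp add: f_def matrix_vector_mult_scaleR power2_eq_square)
    ultimately have "f y / (norm y)\<^sup>2 \<le> f u" using umax by metis
    then show ?thesis
      using False by (simp add: divide_le_eq power2_norm_eq_inner)
  qed (simp add: f_def)
  moreover have "u \<in> W" "u \<bullet> u = 1" using \<open>u \<in> K\<close> by (auto simp: K_def dot_square_norm)
  ultimately show ?thesis using that unfolding f_def by blast
qed

lemma rayleigh_maximizer_is_eigenvector: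
  fixes S :: "real^'n^'n"
  assumes sym: "transpose S = S" and "subspace W"
    and invariant: "\<And>y. y \<in> W \<Longrightarrow> S *v y \<in> W"
    and "u \<in> W" "u \<bullet> u = 1"
    and max: "\<And>y. y \<in> W \<Longrightarrow> y \<bullet> (S *v y) \<le> (u \<bullet> (S *v u)) * (y \<bullet> y)"
  shows "S *v u = (u \<bullet> (S *v u)) *\<^sub>R u"
proof -
  define m where "m = u \<bullet> (S *v u)"
  define w where "w = S *v u - m *\<^sub>R u"
  have "w \<in> W"
    unfolding w_def using \<open>subspace W\<close> \<open>u \<in> W\<close> invariant
    by (intro subspace_diff subspace_scale) auto
  have inner_w_w: "w \<bullet> (S *v u) - m * (w \<bullet> u) = w \<bullet> w"
    using inner_diff_right[of w "S *v u" "m *\<^sub>R u"] by (simp add: w_def[symmetric])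
  \<comment> \<open>maximality of the Rayleigh quotient at \<open>u\<close>, perturbed along \<open>w\<close>\<close>
  have "2 * t * (w \<bullet> w) + t\<^sup>2 * (w \<bullet> (S *v w) - m * (w \<bullet> w)) \<le> 0" for t
  proof -
    have "u + t *\<^sub>R w \<in> W"
      using \<open>subspace W\<close> \<open>u \<in> W\<close> \<open>w \<in> W\<close> by (intro subspace_add subspace_scale)
    from max[OF this] have
      "m + 2 * t * (w \<bullet> (S *v u)) + t\<^sup>2 * (w \<bullet> (S *v w))
         \<le> m * (1 + 2 * t * (w \<bullet> u) + t\<^sup>2 * (w \<bullet> w))"
      using inner_symmetric_matrix[OF sym, of u w] \<open>u \<bullet> u = 1\<close>
      by (simp add: m_def[symmetric] inner_commute power2_eq_square algebra_simps)
    then show ?thesis by (simp only: inner_w_w[symmetric]) (simp add: algebra_simps)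
  qed
  moreover have "w \<bullet> (S *v w) - m * (w \<bullet> w) \<le> 0"
    using max[OF \<open>w \<in> W\<close>] by (simp add: m_def)
  ultimately have "w \<bullet> w = 0" by (rule quadratic_nonpos_imp_linear_coeff_zero)
  then show ?thesis by (simp add: w_def m_def)
qed

lemma symmetric_matrix_eigenvector_orthogonal_to:
  fixes S :: "real^'n^'n" and B :: "(real^'n) set"
  assumes sym: "transpose S = S" and "finite B" and "card B < CARD('n)"
    and eigen: "\<And>b. b \<in> B \<Longrightarrow> \<exists>c. S *v b = c *\<^sub>R b"
  obtains u c where "u \<bullet> u = 1" "\<And>b. b \<in> B \<Longrightarrow> orthogonal b u" "S *v u = c *\<^sub>R u"
proof -
  define W where "W = {y. \<forall>b \<in> B. orthogonal b y}"
  have "subspace W" unfolding W_def by (rule subspace_orthogonal_to_vectors)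
  have "dim B < DIM(real^'n)"
    using dim_le_card'[OF \<open>finite B\<close>] \<open>card B < CARD('n)\<close> by simp
  then obtain z where "z \<noteq> 0" "\<And>y. y \<in> span B \<Longrightarrow> orthogonal z y"
    using orthogonal_to_subspace_exists by blast
  then have "z \<in> W" "z \<noteq> 0"
    by (auto simp: W_def orthogonal_commute span_base)
  then have "W \<noteq> {0}" by blast
  have invariant: "S *v y \<in> W" if "y \<in> W" for y
  proof -
    have "orthogonal b (S *v y)" if "b \<in> B" for b
    proof -
      obtain c where "S *v b = c *\<^sub>R b" using eigen \<open>b \<in> B\<close> by blast
      then show ?thesis
        using \<open>y \<in> W\<close> \<open>b \<in> B\<close> inner_symmetric_matrix[OF sym, of b y]
        by (simp add: W_def orthogonal_def)
    qed
    then show ?thesis by (simp add: W_def)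
  qed
  obtain u where "u \<in> W" "u \<bullet> u = 1"
    and "\<And>y. y \<in> W \<Longrightarrow> y \<bullet> (S *v y) \<le> (u \<bullet> (S *v u)) * (y \<bullet> y)"
    using subspace_rayleigh_maximizer[OF \<open>subspace W\<close> \<open>W \<noteq> {0}\<close>] by blast
  then have "S *v u = (u \<bullet> (S *v u)) *\<^sub>R u"
    using rayleigh_maximizer_is_eigenvector[OF sym \<open>subspace W\<close> invariant] by blast
  with \<open>u \<in> W\<close> \<open>u \<bullet> u = 1\<close> show ?thesis using that by (auto simp: W_def)
qed

lemma symmetric_matrix_orthonormal_eigenvectors:
  fixes S :: "real^'n^'n"
  assumes sym: "transpose S = S" and "k \<le> CARD('n)"
  shows "\<exists>B. finite B \<and> card B = k \<and> pairwise orthogonal B \<and>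
           (\<forall>b \<in> B. b \<bullet> b = 1 \<and> (\<exists>c. S *v b = c *\<^sub>R b))"
  using \<open>k \<le> CARD('n)\<close>
proof (induction k)
  case 0
  show ?case by (intro exI[of _ "{}"]) auto
next
  case (Suc k)
  then obtain B where "finite B" "card B = k" "pairwise orthogonal B"
    and B: "\<forall>b \<in> B. b \<bullet> b = 1 \<and> (\<exists>c. S *v b = c *\<^sub>R b)"
    by auto
  moreover obtain u c where "u \<bullet> u = 1" "\<And>b. b \<in> B \<Longrightarrow> orthogonal b u" "S *v u = c *\<^sub>R u"
    using symmetric_matrix_eigenvector_orthogonal_to[OF sym \<open>finite B\<close>] B Suc.prems \<open>card B = k\<close>
    by (metis Suc_le_lessD)
  moreover have "u \<notin> B"
  proof
    assume "u \<in> B"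
    then have "u \<bullet> u = 0" using \<open>\<And>b. b \<in> B \<Longrightarrow> orthogonal b u\<close> by (simp add: orthogonal_def)
    with \<open>u \<bullet> u = 1\<close> show False by simp
  qed
  ultimately show ?case
    by (intro exI[of _ "insert u B"]) (auto simp: pairwise_insert orthogonal_commute)
qed

locale orthonormal_eigenbasis =
  fixes S :: "real^'n^'n" and v :: "'n \<Rightarrow> real^'n" and d :: "'n \<Rightarrow> real"
  assumes orthonormal: "\<And>i j. v i \<bullet> v j = (if i = j then 1 else 0)"
    and eigen: "\<And>i. S *v v i = d i *\<^sub>R v i"

lemma symmetric_matrix_has_orthonormal_eigenbasis:
  fixes S :: "real^'n^'n"
  assumes sym: "transpose S = S"
  obtains v d where "orthonormal_eigenbasis S v d"
proof -
  obtain B where "finite B" "card B = CARD('n)" "pairwise orthogonal B"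
    and B: "\<forall>b \<in> B. b \<bullet> b = 1 \<and> (\<exists>c. S *v b = c *\<^sub>R b)"
    using symmetric_matrix_orthonormal_eigenvectors[OF sym] by blast
  then obtain v where v: "bij_betw v (UNIV :: 'n set) B"
    using finite_same_card_bij[of "UNIV :: 'n set" B] by auto
  then have "v i \<in> B" for i by (auto simp: bij_betw_def)
  define d where "d i = (SOME c. S *v v i = c *\<^sub>R v i)" for i
  have "S *v v i = d i *\<^sub>R v i" for i
    unfolding d_def by (rule someI_ex) (use B \<open>\<And>i. v i \<in> B\<close> in blast)
  moreover have "v i \<bullet> v j = (if i = j then 1 else 0)" for i j
  proof (cases "i = j")
    case False
    then have "v i \<noteq> v j" using bij_betw_imp_inj_on[OF v] by (auto dest: inj_onD)
    with \<open>pairwise orthogonal B\<close> \<open>\<And>i. v i \<in> B\<close> False show ?thesis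
      by (simp add: pairwise_def orthogonal_def)
  qed (use B \<open>\<And>i. v i \<in> B\<close> in auto)
  ultimately show ?thesis
    by (intro that orthonormal_eigenbasis.intro)
qed

context orthonormal_eigenbasis
begin

definition basis_matrix :: "real^'n^'n" where
  "basis_matrix = (\<chi> r i. v i $ r)"

lemma basis_matrix_orthogonal:
  "transpose basis_matrix ** basis_matrix = mat 1"
  "basis_matrix ** transpose basis_matrix = mat 1"
proof -
  show "transpose basis_matrix ** basis_matrix = mat 1"
    by (simp add: basis_matrix_def vec_eq_iff matrix_matrix_mult_def transpose_def mat_def
        orthonormal[symmetric] inner_vec_def)
  then show "basis_matrix ** transpose basis_matrix = mat 1"
    using matrix_left_right_inverse by blast
qed

lemma expansion: "x = (\<Sum>i\<in>UNIV. (v i \<bullet> x) *\<^sub>R v i)"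
proof -
  have "x = basis_matrix *v (transpose basis_matrix *v x)"
    by (simp add: matrix_vector_mul_assoc basis_matrix_orthogonal del: transpose_matrix_vector)
  also have "\<dots> = (\<Sum>i\<in>UNIV. (v i \<bullet> x) *\<^sub>R v i)"
    by (simp add: matrix_mult_sum basis_matrix_def column_def transpose_def matrix_vector_mult_def
        inner_vec_def scalar_mult_eq_scaleR vector_matrix_mult_def mult.commute)
  finally show ?thesis .
qed

lemma inner_coordinates:
  "(\<Sum>i\<in>UNIV. c i *\<^sub>R v i) \<bullet> (\<Sum>j\<in>UNIV. e j *\<^sub>R v j) = (\<Sum>i\<in>UNIV. c i * e i)"
  by (simp add: inner_sum_left inner_sum_right orthonormal if_distrib cong: if_cong)
    (simp add: mult.commute)

lemma inner_eq_sum: "x \<bullet> z = (\<Sum>i\<in>UNIV. (v i \<bullet> x) * (v i \<bullet> z))"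
  using inner_coordinates[of "\<lambda>i. v i \<bullet> x" "\<lambda>i. v i \<bullet> z"] by (simp only: expansion[symmetric])

lemma mult_vec_eq_sum: "S *v x = (\<Sum>i\<in>UNIV. (d i * (v i \<bullet> x)) *\<^sub>R v i)"
proof -
  have "S *v x = S *v (\<Sum>i\<in>UNIV. (v i \<bullet> x) *\<^sub>R v i)"
    by (rule arg_cong[where f = "(*v) S", OF expansion])
  also have "\<dots> = (\<Sum>i\<in>UNIV. (d i * (v i \<bullet> x)) *\<^sub>R v i)"
    by (simp add: vec.sum matrix_vector_mult_scaleR eigen mult.commute)
  finally show ?thesis .
qed

lemma quadratic_form_eq_sum: "x \<bullet> (S *v x) = (\<Sum>i\<in>UNIV. d i * (v i \<bullet> x)\<^sup>2)"
proof -
  have "x \<bullet> (S *v x) = (\<Sum>i\<in>UNIV. (v i \<bullet> x) * (d i * (v i \<bullet> x)))"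
    using inner_coordinates[of "\<lambda>i. v i \<bullet> x" "\<lambda>i. d i * (v i \<bullet> x)"]
    by (simp only: expansion[symmetric] mult_vec_eq_sum[symmetric])
  then show ?thesis by (simp add: power2_eq_square mult_ac)
qed

lemma norm_mult_vec_eq_sum: "(S *v x) \<bullet> (S *v x) = (\<Sum>i\<in>UNIV. (d i)\<^sup>2 * (v i \<bullet> x)\<^sup>2)"
proof -
  have "(S *v x) \<bullet> (S *v x) = (\<Sum>i\<in>UNIV. (d i * (v i \<bullet> x)) * (d i * (v i \<bullet> x)))"
    using inner_coordinates[of "\<lambda>i. d i * (v i \<bullet> x)" "\<lambda>i. d i * (v i \<bullet> x)"]
    by (simp only: mult_vec_eq_sum[symmetric])
  then show ?thesis by (simp add: power2_eq_square mult_ac)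
qed

lemma basis_matrix_diagonalizes:
  "transpose basis_matrix ** S ** basis_matrix = diag_vec (\<chi> i. d i)"
proof -
  have "S ** basis_matrix = basis_matrix ** diag_vec (\<chi> i. d i)"
  proof -
    have "(S ** basis_matrix) $ r $ i = (S *v v i) $ r" for r i
      by (simp add: basis_matrix_def matrix_matrix_mult_def matrix_vector_mult_def)
    then show ?thesis
      by (simp add: vec_eq_iff eigen basis_matrix_def diag_vec_def matrix_matrix_mult_def
          if_distrib cong: if_cong)
  qed
  then show ?thesis
    by (simp add: matrix_mul_assoc[symmetric]) (simp add: matrix_mul_assoc basis_matrix_orthogonal)
qed

end

section \<open>Characteristic polynomial and ordered eigenvalues\<close>

lemma matrix_diff_ldistrib:
  fixes A :: "'a::ring_1^'n^'m"
  shows "A ** (B - C) = A ** B - A ** C"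
  by (simp add: vec_eq_iff matrix_matrix_mult_def algebra_simps sum_subtractf)

lemma matrix_diff_rdistrib:
  fixes A :: "'a::ring_1^'n^'m"
  shows "(B - C) ** A = B ** A - C ** A"
  by (simp add: vec_eq_iff matrix_matrix_mult_def algebra_simps sum_subtractf)

lemma matrix_mul_mat_commute:
  fixes A B :: "'a::comm_ring_1^'n^'n"
  shows "A ** mat c ** B = mat c ** (A ** B)"
  by (simp add: vec_eq_iff matrix_matrix_mult_def mat_def if_distrib if_distribR sum_distrib_left
      mult_ac cong: if_cong)

definition const_poly_matrix :: "'a::comm_ring_1^'n^'n \<Rightarrow> 'a poly^'n^'n" where
  "const_poly_matrix M = (\<chi> i j. [:M $ i $ j:])"

lemma const_poly_matrix_mult:
  "const_poly_matrix (A ** B) = const_poly_matrix A ** const_poly_matrix B"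
  by (simp add: const_poly_matrix_def vec_eq_iff matrix_matrix_mult_def sum_to_poly)
    (simp add: mult.commute)

lemma const_poly_matrix_mat_1: "const_poly_matrix (mat 1) = mat 1"
  by (simp add: const_poly_matrix_def vec_eq_iff mat_def)

lemma charpoly_eq_det: "charpoly A = det (mat [:0, 1:] - const_poly_matrix A)"
  by (simp add: charpoly_def const_poly_matrix_def mat_def)

lemma charpoly_similar:
  fixes A P Q :: "real^'n^'n"
  assumes "P ** Q = mat 1"
  shows "charpoly (P ** A ** Q) = charpoly A"
proof -
  let ?X = "mat [:0, 1:] :: real poly^'n^'n"
  let ?P = "const_poly_matrix P" and ?Q = "const_poly_matrix Q"
  have PQ: "?P ** ?Q = mat 1"
    using assms by (simp add: const_poly_matrix_mult[symmetric] const_poly_matrix_mat_1)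
  have "?P ** (?X - const_poly_matrix A) ** ?Q = ?P ** ?X ** ?Q - ?P ** const_poly_matrix A ** ?Q"
    by (simp only: matrix_diff_ldistrib matrix_diff_rdistrib)
  also have "?P ** ?X ** ?Q = ?X"
    by (simp only: matrix_mul_mat_commute PQ matrix_mul_rid)
  also have "?P ** const_poly_matrix A ** ?Q = const_poly_matrix (P ** A ** Q)"
    by (simp only: const_poly_matrix_mult)
  finally have similar: "?P ** (?X - const_poly_matrix A) ** ?Q = ?X - const_poly_matrix (P ** A ** Q)" .
  have "det ?P * det ?Q = 1"
    using PQ by (metis det_I det_mul)
  have "charpoly (P ** A ** Q) = det ?P * det (?X - const_poly_matrix A) * det ?Q"
    by (simp only: charpoly_eq_det similar[symmetric] det_mul)
  also have "\<dots> = det ?P * det ?Q * charpoly A"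
    by (simp only: charpoly_eq_det mult_ac)
  finally show ?thesis using \<open>det ?P * det ?Q = 1\<close> by simp
qed

lemma charpoly_diag_vec: "charpoly (diag_vec d) = (\<Prod>i\<in>UNIV. [:- d $ i, 1:])"
  unfolding charpoly_eq_det
  by (subst det_diagonal) (auto simp: const_poly_matrix_def diag_vec_def mat_def)

lemma order_prod_linear:
  fixes d :: "'a \<Rightarrow> real"
  assumes "finite A"
  shows "order r (\<Prod>i\<in>A. [:- d i, 1:]) = card {i \<in> A. d i = r}"
  using assms
proof (induction A rule: finite_induct)
  case (insert x A)
  let ?p = "\<Prod>i\<in>A. [:- d i, 1:]"
  have "?p \<noteq> 0" using insert.hyps(1) by simp
  then have "[:- d x, 1:] * ?p \<noteq> 0" by (metis mult_eq_0_iff pCons_eq_0_iff one_neq_zero)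
  then have "order r (\<Prod>i\<in>insert x A. [:- d i, 1:]) = order r [:- d x, 1:] + order r ?p"
    using order_mult by (simp only: prod.insert[OF insert.hyps])
  moreover have "order r [:- d x, 1:] = (if d x = r then 1 else 0)"
  proof (cases "d x = r")
    case True
    then show ?thesis using order_power_n_n[of r 1] by simp
  next
    case False
    then show ?thesis by (simp add: order_0I)
  qed
  moreover have "{i \<in> insert x A. d i = r} = (if d x = r then insert x else id) {i \<in> A. d i = r}"
    by auto
  ultimately show ?case
    using insert by simp
qed simp

lemma Inf_card_sublevel:
  fixes d :: "'n::finite \<Rightarrow> real"
  assumes "1 \<le> k" "k \<le> CARD('n)"
  shows "k \<le> card {i. d i \<le> Inf {t. k \<le> card {i. d i \<le> t}}}"
    and "k \<le> card {i. d i \<le> t} \<Longrightarrow> Inf {t. k \<le> card {i. d i \<le> t}} \<le> t"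
proof -
  define T where "T = {t. k \<le> card {i. d i \<le> t}}"
  define C where "C = T \<inter> range d"
  have "Max (range d) \<in> T" "Max (range d) \<in> range d"
    using \<open>k \<le> CARD('n)\<close> by (simp_all add: T_def)
  then have "C \<noteq> {}" by (auto simp: C_def)
  have below_value: "\<exists>s \<in> C. s \<le> t" if "t \<in> T" for t
  proof -
    define A where "A = {i. d i \<le> t}"
    have "k \<le> card A" using that by (simp add: T_def A_def)
    then have "A \<noteq> {}" using \<open>1 \<le> k\<close> by auto
    define s where "s = Max (d ` A)"
    have "s \<in> d ` A" unfolding s_def using \<open>A \<noteq> {}\<close> by simp
    then have "s \<le> t" by (auto simp: A_def)
    have "{i. d i \<le> s} = A"
      using \<open>s \<le> t\<close> by (auto simp: A_def s_def)
    then have "s \<in> C"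
      using \<open>k \<le> card A\<close> \<open>s \<in> d ` A\<close> by (auto simp: C_def T_def)
    with \<open>s \<le> t\<close> show ?thesis by blast
  qed
  have "finite C" by (simp add: C_def)
  have "Min C \<in> T"
    using Min_in[OF \<open>finite C\<close> \<open>C \<noteq> {}\<close>] by (simp add: C_def)
  moreover have "Min C \<le> t" if "t \<in> T" for t
    using below_value[OF that] Min_le[OF \<open>finite C\<close>] by (blast intro: order_trans)
  ultimately have "Inf T \<in> T \<and> (\<forall>t \<in> T. Inf T \<le> t)"
    using cInf_eq_minimum[of "Min C" T] by auto
  then show "k \<le> card {i. d i \<le> Inf {t. k \<le> card {i. d i \<le> t}}}"
    and "k \<le> card {i. d i \<le> t} \<Longrightarrow> Inf {t. k \<le> card {i. d i \<le> t}} \<le> t"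
    unfolding T_def by auto
qed

lemma poly_map_complex_of_real:
  "poly (map_poly complex_of_real p) (complex_of_real x) = complex_of_real (poly p x)"
  by (induction p) (auto simp: map_poly_pCons)

context orthonormal_eigenbasis
begin

lemma charpoly_eq_prod: "charpoly S = (\<Prod>i\<in>UNIV. [:- d i, 1:])"
  using charpoly_similar[OF basis_matrix_orthogonal(1), of S] charpoly_diag_vec[of "\<chi> i. d i"]
  by (simp add: basis_matrix_diagonalizes)

lemma eig_count_eq_card: "eig_count S t = card {i. d i \<le> t}"
proof -
  define V where "V = {r \<in> range d. r \<le> t}"
  have "{r. poly (charpoly S) r = 0 \<and> r \<le> t} = V"
    by (auto simp: V_def charpoly_eq_prod poly_prod)
  then have "eig_count S t = (\<Sum>r\<in>V. card {i. d i = r})"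
    by (simp add: eig_count_def charpoly_eq_prod order_prod_linear)
  also have "\<dots> = card (\<Union>r\<in>V. {i. d i = r})"
    by (rule card_UN_disjoint[symmetric]) (auto simp: V_def)
  also have "(\<Union>r\<in>V. {i. d i = r}) = {i. d i \<le> t}"
    by (auto simp: V_def)
  finally show ?thesis .
qed

lemma eigval_eq_Inf: "eigval k S = Inf {t. k \<le> card {i. d i \<le> t}}"
  by (simp add: eigval_def eig_count_eq_card)

lemma card_sublevel_eigval:
  "1 \<le> k \<Longrightarrow> k \<le> CARD('n) \<Longrightarrow> k \<le> card {i. d i \<le> eigval k S}"
  unfolding eigval_eq_Inf by (rule Inf_card_sublevel(1))

lemma eigval_le:
  "1 \<le> k \<Longrightarrow> k \<le> CARD('n) \<Longrightarrow> k \<le> card {i. d i \<le> t} \<Longrightarrow> eigval k S \<le> t"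
  unfolding eigval_eq_Inf by (rule Inf_card_sublevel(2))

lemma le_eigval_max: "d i \<le> eigval CARD('n) S"
proof -
  have "{j. d j \<le> eigval CARD('n) S} = UNIV"
    using card_sublevel_eigval[of "CARD('n)"] by (intro card_seteq) auto
  then show ?thesis by auto
qed

lemma abs_le_spectral_radius: "\<bar>d i\<bar> \<le> spectral_radius S"
proof -
  define p where "p = map_poly complex_of_real (charpoly S)"
  have "charpoly S \<noteq> 0" by (simp add: charpoly_eq_prod)
  then have "p \<noteq> 0" unfolding p_def by (subst map_poly_eq_0_iff) auto
  then have "finite {cmod z | z. poly p z = 0}"
    using poly_roots_finite[of p] by (simp add: setcompr_eq_image)
  moreover have "poly p (complex_of_real (d i)) = 0"
    by (simp add: p_def poly_map_complex_of_real charpoly_eq_prod poly_prod) blast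
  then have "cmod (complex_of_real (d i)) \<in> {cmod z | z. poly p z = 0}" by blast
  ultimately have "cmod (complex_of_real (d i)) \<le> Sup {cmod z | z. poly p z = 0}"
    by (rule le_cSup_finite)
  then show ?thesis by (simp add: spectral_radius_def p_def)
qed

lemma eigenvalue_nonneg:
  assumes "\<And>x. 0 \<le> x \<bullet> (S *v x)"
  shows "0 \<le> d i"
  using assms[of "v i"] by (simp add: eigen orthonormal)

end

section \<open>Rayleigh-quotient bounds\<close>

lemma loewner_ge_iff: "loewner_ge M N \<longleftrightarrow> (\<forall>x. x \<bullet> (N *v x) \<le> x \<bullet> (M *v x))"
  by (simp add: loewner_ge_def matrix_vector_mult_diff_rdistrib inner_diff_right)

lemma gram_matrix_symmetric: "transpose (transpose M ** M) = transpose M ** (M :: real^'n^'m)"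
  by (simp add: matrix_transpose_mul)

lemma gram_matrix_quadratic_form:
  fixes M :: "real^'n^'m"
  shows "x \<bullet> ((transpose M ** M) *v x) = (M *v x) \<bullet> (M *v x)"
  using inner_transpose_matrix_vector[of x M "M *v x"]
  by (simp add: matrix_vector_mul_assoc[symmetric])

lemma gram_matrix_psd: "loewner_ge (transpose M ** (M :: real^'n^'m)) 0"
  unfolding loewner_ge_iff gram_matrix_quadratic_form by simp

lemma symmetric_quadratic_form_le_eigval_max:
  fixes S :: "real^'n^'n"
  assumes "transpose S = S"
  shows "y \<bullet> (S *v y) \<le> eigval CARD('n) S * (y \<bullet> y)"
proof -
  obtain v d where "orthonormal_eigenbasis S v d"
    using symmetric_matrix_has_orthonormal_eigenbasis[OF assms] .
  then interpret orthonormal_eigenbasis S v d .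
  have "(\<Sum>i\<in>UNIV. d i * (v i \<bullet> y)\<^sup>2) \<le> (\<Sum>i\<in>UNIV. eigval CARD('n) S * (v i \<bullet> y)\<^sup>2)"
    by (intro sum_mono mult_right_mono le_eigval_max) simp
  then show ?thesis
    by (simp add: quadratic_form_eq_sum inner_eq_sum[of y y] sum_distrib_left power2_eq_square)
qed

lemma symmetric_quadratic_form_le_spectral_radius:
  fixes S :: "real^'n^'n"
  assumes "transpose S = S"
  shows "y \<bullet> (S *v y) \<le> spectral_radius S * (y \<bullet> y)"
proof -
  obtain v d where "orthonormal_eigenbasis S v d"
    using symmetric_matrix_has_orthonormal_eigenbasis[OF assms] .
  then interpret orthonormal_eigenbasis S v d .
  have "(\<Sum>i\<in>UNIV. d i * (v i \<bullet> y)\<^sup>2) \<le> (\<Sum>i\<in>UNIV. spectral_radius S * (v i \<bullet> y)\<^sup>2)"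
    using abs_le_spectral_radius by (intro sum_mono mult_right_mono) (auto dest: abs_le_D1)
  then show ?thesis
    by (simp add: quadratic_form_eq_sum inner_eq_sum[of y y] sum_distrib_left power2_eq_square)
qed

lemma symmetric_spectral_radius_nonneg:
  fixes S :: "real^'n^'n"
  assumes "transpose S = S"
  shows "0 \<le> spectral_radius S"
proof -
  obtain v d where "orthonormal_eigenbasis S v d"
    using symmetric_matrix_has_orthonormal_eigenbasis[OF assms] .
  then show ?thesis
    by (meson abs_ge_zero order_trans orthonormal_eigenbasis.abs_le_spectral_radius)
qed

lemma psd_eigval_max_nonneg:
  fixes S :: "real^'n^'n"
  assumes "transpose S = S" and "loewner_ge S 0"
  shows "0 \<le> eigval CARD('n) S"
proof -
  obtain v d where "orthonormal_eigenbasis S v d"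
    using symmetric_matrix_has_orthonormal_eigenbasis[OF assms(1)] .
  then interpret orthonormal_eigenbasis S v d .
  obtain i :: 'n where True by blast
  show ?thesis
    using eigenvalue_nonneg[of i] le_eigval_max[of i] \<open>loewner_ge S 0\<close>
    by (force simp: loewner_ge_iff)
qed

lemma psd_norm_mult_vec_le_eigval_max:
  fixes S :: "real^'n^'n"
  assumes "transpose S = S" and "loewner_ge S 0"
  shows "(S *v y) \<bullet> (S *v y) \<le> (eigval CARD('n) S)\<^sup>2 * (y \<bullet> y)"
proof -
  obtain v d where "orthonormal_eigenbasis S v d"
    using symmetric_matrix_has_orthonormal_eigenbasis[OF assms(1)] .
  then interpret orthonormal_eigenbasis S v d .
  have "0 \<le> d i" for i
    using \<open>loewner_ge S 0\<close> by (intro eigenvalue_nonneg) (simp add: loewner_ge_iff)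
  then have "(d i)\<^sup>2 \<le> (eigval CARD('n) S)\<^sup>2" for i
    using le_eigval_max by (intro power_mono)
  then have "(\<Sum>i\<in>UNIV. (d i)\<^sup>2 * (v i \<bullet> y)\<^sup>2) \<le> (\<Sum>i\<in>UNIV. (eigval CARD('n) S)\<^sup>2 * (v i \<bullet> y)\<^sup>2)"
    by (intro sum_mono mult_right_mono) simp_all
  then show ?thesis
    by (simp add: norm_mult_vec_eq_sum inner_eq_sum[of y y] sum_distrib_left power2_eq_square)
qed

lemma psd_square_quadratic_form_le_eigval_max:
  fixes S :: "real^'n^'n"
  assumes "transpose S = S" and "loewner_ge S 0"
  shows "y \<bullet> ((S ** S) *v y) \<le> (eigval CARD('n) S)\<^sup>2 * (y \<bullet> y)"
  using gram_matrix_quadratic_form[of y S] psd_norm_mult_vec_le_eigval_max[OF assms]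
  by (simp add: assms(1))

lemma psd_eigval_2_nonneg:
  fixes S :: "real^'n^'n"
  assumes "transpose S = S" and "loewner_ge S 0" and "2 \<le> CARD('n)"
  shows "0 \<le> eigval 2 S"
proof -
  obtain v d where "orthonormal_eigenbasis S v d"
    using symmetric_matrix_has_orthonormal_eigenbasis[OF assms(1)] .
  then interpret orthonormal_eigenbasis S v d .
  have "{i. d i \<le> eigval 2 S} \<noteq> {}"
    using card_sublevel_eigval[of 2] \<open>2 \<le> CARD('n)\<close> by (metis card.empty not_numeral_le_zero one_le_numeral)
  then obtain i where "d i \<le> eigval 2 S" by blast
  with eigenvalue_nonneg[of i] \<open>loewner_ge S 0\<close> show ?thesis
    by (force simp: loewner_ge_iff)
qed

lemma two_le_card_obtain:
  assumes "finite A" "2 \<le> card A"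
  obtains a b where "a \<in> A" "b \<in> A" "a \<noteq> b"
  using assms card_le_Suc0_iff_eq[OF \<open>finite A\<close>] by fastforce

lemma psd_eigval_2_le_quadratic_form:
  fixes S :: "real^'n^'n"
  assumes sym: "transpose S = S" and "loewner_ge S 0" and "S *v 1 = 0"
    and "2 \<le> CARD('n)" and "y \<bullet> 1 = 0"
  shows "eigval 2 S * (y \<bullet> y) \<le> y \<bullet> (S *v y)"
proof -
  obtain v d where "orthonormal_eigenbasis S v d"
    using symmetric_matrix_has_orthonormal_eigenbasis[OF sym] .
  then interpret orthonormal_eigenbasis S v d .
  define l where "l = eigval 2 S"
  have d_nonneg: "0 \<le> d i" for i
    using \<open>loewner_ge S 0\<close> by (intro eigenvalue_nonneg) (simp add: loewner_ge_iff)
  have "l * (v i \<bullet> y)\<^sup>2 \<le> d i * (v i \<bullet> y)\<^sup>2" for i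
  proof (cases "l \<le> d i \<or> l \<le> 0")
    case True
    then show ?thesis
      using d_nonneg[of i] by (auto intro: mult_right_mono order_trans)
  next
    case False
    \<comment> \<open>then \<open>d i\<close> is the only eigenvalue below \<open>l > 0\<close>, every other eigenvector is
      orthogonal to \<open>1\<close>, so \<open>v i\<close> spans the line of \<open>1\<close> and is orthogonal to \<open>y\<close>\<close>
    then have "d i < l" "0 < l" by auto
    have orth_1: "v j \<bullet> 1 = 0" if "j \<noteq> i" for j
    proof -
      have "l \<le> d j"
      proof (rule ccontr)
        assume "\<not> l \<le> d j"
        have "card {i, j} \<le> card {k. d k \<le> max (d i) (d j)}"
          by (intro card_mono) auto
        then have "l \<le> max (d i) (d j)"
          unfolding l_def using \<open>j \<noteq> i\<close> \<open>2 \<le> CARD('n)\<close> by (intro eigval_le) auto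
        with \<open>d i < l\<close> \<open>\<not> l \<le> d j\<close> show False by simp
      qed
      moreover have "d j * (v j \<bullet> 1) = 0"
        using inner_symmetric_matrix[OF sym, of "v j" 1] \<open>S *v 1 = 0\<close> by (simp add: eigen)
      ultimately show ?thesis using \<open>0 < l\<close> by simp
    qed
    have one_coordinate: "x \<bullet> 1 = (v i \<bullet> x) * (v i \<bullet> 1)" for x
      unfolding inner_eq_sum[of x 1] by (subst sum.remove[of _ i]) (auto simp: orth_1)
    have "(1::real^'n) \<bullet> 1 \<noteq> 0" by simp
    then have "v i \<bullet> 1 \<noteq> 0" using one_coordinate[of 1] by auto
    then show ?thesis using one_coordinate[of y] \<open>y \<bullet> 1 = 0\<close> by simp
  qed
  then have "(\<Sum>i\<in>UNIV. l * (v i \<bullet> y)\<^sup>2) \<le> (\<Sum>i\<in>UNIV. d i * (v i \<bullet> y)\<^sup>2)"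
    by (rule sum_mono)
  then show ?thesis
    by (simp add: l_def quadratic_form_eq_sum inner_eq_sum[of y y] sum_distrib_left power2_eq_square)
qed

lemma inner_constant_vectors:
  fixes u w :: "real^'n"
  assumes "\<And>i j. u $ i = u $ j" and "\<And>i j. w $ i = w $ j"
  shows "(u \<bullet> w)\<^sup>2 = (u \<bullet> u) * (w \<bullet> w)"
proof -
  obtain k :: 'n where True by blast
  define a b where "a = u $ k" and "b = w $ k"
  have "u = a *\<^sub>R 1" "w = b *\<^sub>R 1"
    using assms by (simp_all add: vec_eq_iff a_def b_def)
  then show ?thesis by (simp add: power2_eq_square algebra_simps)
qed

lemma psd_eigval_2_pos:
  fixes S :: "real^'n^'n"
  assumes sym: "transpose S = S" and "loewner_ge S 0" and "2 \<le> CARD('n)"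
    and kernel_constant: "\<And>x i j. S *v x = 0 \<Longrightarrow> x $ i = x $ j"
  shows "0 < eigval 2 S"
proof (rule ccontr)
  assume "\<not> 0 < eigval 2 S"
  obtain v d where "orthonormal_eigenbasis S v d"
    using symmetric_matrix_has_orthonormal_eigenbasis[OF sym] .
  then interpret orthonormal_eigenbasis S v d .
  obtain i j where "d i \<le> eigval 2 S" "d j \<le> eigval 2 S" "i \<noteq> j"
    using card_sublevel_eigval[of 2] \<open>2 \<le> CARD('n)\<close>
    by (auto elim!: two_le_card_obtain[rotated])
  moreover have "0 \<le> d k" for k
    using \<open>loewner_ge S 0\<close> by (intro eigenvalue_nonneg) (simp add: loewner_ge_iff)
  ultimately have "S *v v i = 0" "S *v v j = 0"
    using \<open>\<not> 0 < eigval 2 S\<close> by (simp_all add: eigen order_antisym)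
  then have "(v i \<bullet> v j)\<^sup>2 = (v i \<bullet> v i) * (v j \<bullet> v j)"
    by (intro inner_constant_vectors kernel_constant)
  with \<open>i \<noteq> j\<close> show False by (simp add: orthonormal)
qed

section \<open>Loewner order on matrices annihilating the all-ones vector\<close>

lemma quadratic_form_add_constant:
  fixes S :: "real^'n^'n"
  assumes sym: "transpose S = S" and "S *v 1 = 0"
  shows "(x + c *\<^sub>R 1) \<bullet> (S *v (x + c *\<^sub>R 1)) = x \<bullet> (S *v x)"
proof -
  have "1 \<bullet> (S *v x) = 0"
    using inner_symmetric_matrix[OF sym, of 1 x] \<open>S *v 1 = 0\<close> by simp
  then show ?thesis
    using \<open>S *v 1 = 0\<close> by (simp add: matrix_vector_right_distrib matrix_vector_mult_scaleR
        inner_add_left)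
qed

lemma loewner_ge_if_centered:
  fixes M N :: "real^'n^'n"
  assumes "transpose M = M" "transpose N = N" "M *v 1 = 0" "N *v 1 = 0"
    and centered: "\<And>y. y \<bullet> 1 = 0 \<Longrightarrow> y \<bullet> (N *v y) \<le> y \<bullet> (M *v y)"
  shows "loewner_ge M N"
  unfolding loewner_ge_def
proof
  fix x :: "real^'n"
  define S where "S = M - N"
  have "transpose S = S" "S *v 1 = 0"
    using assms by (simp_all add: S_def vec_eq_iff transpose_def matrix_vector_mult_diff_rdistrib)
  define c where "c = (x \<bullet> 1) / (1 \<bullet> (1::real^'n))"
  define y where "y = x - c *\<^sub>R 1"
  have "y \<bullet> 1 = 0" by (simp add: y_def c_def inner_diff_left)
  have "x = y + c *\<^sub>R 1" by (simp add: y_def)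
  then have "x \<bullet> (S *v x) = y \<bullet> (S *v y)"
    using quadratic_form_add_constant[OF \<open>transpose S = S\<close> \<open>S *v 1 = 0\<close>] by simp
  also have "\<dots> \<ge> 0"
    using centered[OF \<open>y \<bullet> 1 = 0\<close>] by (simp add: S_def matrix_vector_mult_diff_rdistrib inner_diff_right)
  finally show "0 \<le> x \<bullet> ((M - N) *v x)" by (simp add: S_def)
qed

lemma loewner_ge_scaleR_right_of_bounds:
  fixes M N :: "real^'n^'n"
  assumes "transpose M = M" "transpose N = N" "M *v 1 = 0" "N *v 1 = 0"
    and lower: "\<And>y. y \<bullet> 1 = 0 \<Longrightarrow> a * (y \<bullet> y) \<le> y \<bullet> (M *v y)"
    and upper: "\<And>y. y \<bullet> 1 = 0 \<Longrightarrow> y \<bullet> (N *v y) \<le> b * (y \<bullet> y)"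
    and "0 \<le> a" "0 \<le> b"
  shows "loewner_ge M ((a / b) *\<^sub>R N)"
proof (rule loewner_ge_if_centered)
  fix y :: "real^'n"
  assume "y \<bullet> 1 = 0"
  have "a / b * (y \<bullet> (N *v y)) \<le> a * (y \<bullet> y)"
  proof (cases "b = 0")
    case False
    then have "a / b * (y \<bullet> (N *v y)) \<le> a / b * (b * (y \<bullet> y))"
      using upper[OF \<open>y \<bullet> 1 = 0\<close>] \<open>0 \<le> a\<close> \<open>0 \<le> b\<close> by (intro mult_left_mono) auto
    with False show ?thesis by simp
  qed (simp add: \<open>0 \<le> a\<close>)
  with lower[OF \<open>y \<bullet> 1 = 0\<close>] show "y \<bullet> ((a / b) *\<^sub>R N *v y) \<le> y \<bullet> (M *v y)"
    by (simp add: scaleR_matrix_vector_assoc[symmetric])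
qed (use assms in \<open>simp_all add: transpose_scalar scaleR_matrix_vector_assoc[symmetric]\<close>)

lemma loewner_ge_scaleR_left_of_bounds:
  fixes M N :: "real^'n^'n"
  assumes "transpose M = M" "transpose N = N" "M *v 1 = 0" "N *v 1 = 0"
    and lower: "\<And>y. y \<bullet> 1 = 0 \<Longrightarrow> a * (y \<bullet> y) \<le> y \<bullet> (M *v y)"
    and upper: "\<And>y. y \<bullet> 1 = 0 \<Longrightarrow> y \<bullet> (N *v y) \<le> b * (y \<bullet> y)"
    and "0 < a" "0 \<le> b"
  shows "loewner_ge ((b / a) *\<^sub>R M) N"
proof (rule loewner_ge_if_centered)
  fix y :: "real^'n"
  assume "y \<bullet> 1 = 0"
  have "y \<bullet> (N *v y) \<le> b / a * (a * (y \<bullet> y))"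
    using upper[OF \<open>y \<bullet> 1 = 0\<close>] \<open>0 < a\<close> by simp
  also have "\<dots> \<le> b / a * (y \<bullet> (M *v y))"
    using lower[OF \<open>y \<bullet> 1 = 0\<close>] \<open>0 < a\<close> \<open>0 \<le> b\<close> by (intro mult_left_mono) auto
  finally show "y \<bullet> (N *v y) \<le> y \<bullet> ((b / a) *\<^sub>R M *v y)"
    by (simp add: scaleR_matrix_vector_assoc[symmetric])
qed (use assms in \<open>simp_all add: transpose_scalar scaleR_matrix_vector_assoc[symmetric]\<close>)

section \<open>The Laplacian and the matrices \<open>R\<close> and \<open>U\<close>\<close>

lemma diag_vec_mult_vec_nth: "(diag_vec \<xi> *v x) $ i = \<xi> $ i * x $ i"
  by (simp add: diag_vec_def matrix_vector_mult_def if_distrib if_distribR cong: if_cong)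

lemma laplacian_eq_diag_vec_diff:
  "laplacian A = diag_vec (\<chi> i. \<Sum>k\<in>UNIV. A $ i $ k) - A"
  by (simp add: laplacian_def diag_vec_def vec_eq_iff)

lemma laplacian_mult_vec_nth:
  "(laplacian A *v x) $ i = (\<Sum>j\<in>UNIV. A $ i $ j * (x $ i - x $ j))"
proof -
  have "(laplacian A *v x) $ i = (\<Sum>j\<in>UNIV. A $ i $ j) * x $ i - (\<Sum>j\<in>UNIV. A $ i $ j * x $ j)"
    unfolding laplacian_eq_diag_vec_diff matrix_vector_mult_diff_rdistrib
    by (simp add: diag_vec_mult_vec_nth) (simp add: matrix_vector_mult_def)
  then show ?thesis
    by (simp add: right_diff_distrib sum_subtractf sum_distrib_right)
qed

lemma laplacian_mult_one: "laplacian A *v 1 = 0"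
  by (simp add: vec_eq_iff laplacian_mult_vec_nth)

lemma laplacian_kernel_constant:
  fixes A :: "real^'n^'n"
  assumes nonneg: "\<forall>i j. 0 \<le> A $ i $ j" and irred: "irreducible_mat (laplacian A)"
    and "laplacian A *v u = 0"
  shows "u $ i = u $ j"
proof -
  define M where "M = Max (range (\<lambda>k. u $ k))"
  have "M \<in> range (\<lambda>k. u $ k)" unfolding M_def by (intro Max_in) auto
  then obtain i0 where "u $ i0 = M" by auto
  have le_M: "u $ k \<le> M" for k unfolding M_def by simp
  define E where "E = {(i, j). i \<noteq> j \<and> laplacian A $ i $ j \<noteq> 0}"
  have edge: "u $ b = M" if "u $ a = M" "(a, b) \<in> E" for a b
  proof -
    have "A $ a $ b \<noteq> 0" using that(2) by (auto simp: E_def laplacian_def)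
    have "(\<Sum>j\<in>UNIV. A $ a $ j * (M - u $ j)) = 0"
      using \<open>laplacian A *v u = 0\<close> \<open>u $ a = M\<close>
      by (metis laplacian_mult_vec_nth zero_index)
    moreover have "\<forall>j. 0 \<le> A $ a $ j * (M - u $ j)"
      using nonneg le_M by simp
    ultimately have "A $ a $ b * (M - u $ b) = 0"
      by (simp add: sum_nonneg_eq_0_iff)
    with \<open>A $ a $ b \<noteq> 0\<close> show ?thesis by simp
  qed
  have "u $ k = M" for k
  proof -
    have "(i0, k) \<in> E\<^sup>+" using irred by (simp add: irreducible_mat_def E_def)
    then show ?thesis
      by (induction rule: trancl_induct) (use edge \<open>u $ i0 = M\<close> in blast)+
  qed
  then show ?thesis by simp
qed

lemma irreducible_mat_card_ge_2:
  fixes M :: "real^'n^'n"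
  assumes "irreducible_mat M"
  shows "2 \<le> CARD('n)"
proof -
  obtain i :: 'n where True by blast
  have "(i, i) \<in> {(i, j). i \<noteq> j \<and> M $ i $ j \<noteq> 0}\<^sup>+"
    using assms by (simp add: irreducible_mat_def)
  then obtain j where "i \<noteq> j" by (auto elim: converse_tranclE)
  then have "card {i, j} = 2" by simp
  moreover have "card {i, j} \<le> CARD('n)" by (rule card_mono) auto
  ultimately show ?thesis by simp
qed

lemma transpose_diag_vec: "transpose (diag_vec \<xi>) = diag_vec \<xi>"
  by (simp add: diag_vec_def vec_eq_iff transpose_def)

lemma transpose_add: "transpose (A + B) = transpose A + transpose B"
  by (simp add: transpose_def vec_eq_iff)

lemma R_mat_symmetric: "transpose (R_mat \<xi> L) = R_mat \<xi> L"
  by (simp add: R_mat_def transpose_scalar transpose_add matrix_transpose_mul transpose_diag_vec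
      add.commute)

lemma R_mat_quadratic_form: "x \<bullet> (R_mat \<xi> L *v x) = x \<bullet> (diag_vec \<xi> *v (L *v x))"
proof -
  have "x \<bullet> ((transpose L ** diag_vec \<xi>) *v x) = (L *v x) \<bullet> (diag_vec \<xi> *v x)"
    using inner_transpose_matrix_vector[of x L "diag_vec \<xi> *v x"]
    by (simp add: matrix_vector_mul_assoc[symmetric])
  also have "\<dots> = x \<bullet> (diag_vec \<xi> *v (L *v x))"
    by (simp add: inner_vec_def diag_vec_mult_vec_nth mult_ac)
  finally show ?thesis
    by (simp add: R_mat_def scaleR_matrix_vector_assoc[symmetric] matrix_vector_mult_add_rdistrib
        inner_add_right matrix_vector_mul_assoc[symmetric] del: transpose_matrix_vector)
qed

lemma R_mat_mult_one:
  assumes "\<xi> v* L = 0" and "L *v 1 = 0"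
  shows "R_mat \<xi> L *v 1 = 0"
proof -
  have "diag_vec \<xi> *v 1 = \<xi>" by (simp add: vec_eq_iff diag_vec_mult_vec_nth)
  then show ?thesis
    using assms by (simp add: R_mat_def scaleR_matrix_vector_assoc[symmetric]
        matrix_vector_mult_add_rdistrib matrix_vector_mul_assoc[symmetric])
qed

lemma laplacian_left_null_weighted_sum:
  assumes "\<xi> v* laplacian A = 0"
  shows "(\<Sum>i\<in>UNIV. \<Sum>j\<in>UNIV. \<xi> $ i * A $ i $ j * (f $ i - f $ j)) = 0"
proof -
  have "(\<Sum>i\<in>UNIV. \<Sum>j\<in>UNIV. \<xi> $ i * A $ i $ j * (f $ i - f $ j)) = \<xi> \<bullet> (laplacian A *v f)"
    by (simp add: inner_vec_def laplacian_mult_vec_nth sum_distrib_left mult_ac)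
  also have "\<dots> = 0"
    using dot_lmul_matrix[of \<xi> "laplacian A" f] assms by simp
  finally show ?thesis .
qed

lemma laplacian_weighted_quadratic_form:
  assumes "\<xi> v* laplacian A = 0"
  shows "2 * (x \<bullet> (diag_vec \<xi> *v (laplacian A *v x)))
           = (\<Sum>i\<in>UNIV. \<Sum>j\<in>UNIV. \<xi> $ i * A $ i $ j * (x $ i - x $ j)\<^sup>2)"
proof -
  \<comment> \<open>\<open>(x\<^sub>i - x\<^sub>j)\<^sup>2 = 2 x\<^sub>i (x\<^sub>i - x\<^sub>j) - (x\<^sub>i\<^sup>2 - x\<^sub>j\<^sup>2)\<close>, and the last part sums to zero
    because \<open>\<xi>\<^sup>T L = 0\<close>\<close>
  define sq where "sq = (\<chi> i. (x $ i)\<^sup>2)"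
  have "(\<Sum>i\<in>UNIV. \<Sum>j\<in>UNIV. \<xi> $ i * A $ i $ j * (x $ i - x $ j)\<^sup>2)
      = (\<Sum>i\<in>UNIV. \<Sum>j\<in>UNIV. 2 * (\<xi> $ i * A $ i $ j * (x $ i * (x $ i - x $ j))))
        - (\<Sum>i\<in>UNIV. \<Sum>j\<in>UNIV. \<xi> $ i * A $ i $ j * (sq $ i - sq $ j))"
    by (simp add: sq_def sum_subtractf[symmetric] power2_eq_square algebra_simps)
  also have "\<dots> = 2 * (x \<bullet> (diag_vec \<xi> *v (laplacian A *v x)))"
    using laplacian_left_null_weighted_sum[OF assms, of sq]
    by (simp add: inner_vec_def diag_vec_mult_vec_nth laplacian_mult_vec_nth sum_distrib_left mult_ac)
  finally show ?thesis ..
qed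

lemma R_mat_laplacian_psd:
  assumes "\<forall>i j. 0 \<le> A $ i $ j" and "\<forall>i. 0 \<le> \<xi> $ i" and "\<xi> v* laplacian A = 0"
  shows "loewner_ge (R_mat \<xi> (laplacian A)) 0"
proof -
  have "0 \<le> 2 * (x \<bullet> (R_mat \<xi> (laplacian A) *v x))" for x
    unfolding R_mat_quadratic_form laplacian_weighted_quadratic_form[OF assms(3)]
    using assms(1,2) by (intro sum_nonneg mult_nonneg_nonneg) auto
  then show ?thesis by (simp add: loewner_ge_iff)
qed

lemma U_mat_mult_vec_nth: "(U_mat \<xi> *v x) $ i = \<xi> $ i * (x $ i - \<xi> \<bullet> x)"
  unfolding U_mat_def matrix_vector_mult_diff_rdistrib
  by (simp add: diag_vec_mult_vec_nth)
    (simp add: outer_prod_def matrix_vector_mult_def inner_vec_def sum_distrib_left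
      right_diff_distrib mult_ac)

lemma U_mat_symmetric: "transpose (U_mat \<xi>) = U_mat \<xi>"
  by (simp add: U_mat_def vec_eq_iff transpose_def diag_vec_def outer_prod_def mult.commute)

lemma U_mat_mult_one:
  assumes "(\<Sum>i\<in>UNIV. \<xi> $ i) = 1"
  shows "U_mat \<xi> *v 1 = 0"
  using assms by (simp add: vec_eq_iff U_mat_mult_vec_nth inner_vec_def)

lemma U_mat_psd:
  assumes "(\<Sum>i\<in>UNIV. \<xi> $ i) = 1" and "\<forall>i. 0 \<le> \<xi> $ i"
  shows "loewner_ge (U_mat \<xi>) 0"
proof -
  have "x \<bullet> (U_mat \<xi> *v x) = (\<Sum>i\<in>UNIV. \<xi> $ i * (x $ i - \<xi> \<bullet> x)\<^sup>2)" for x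
  proof -
    define m where "m = \<xi> \<bullet> x"
    have "(\<Sum>i\<in>UNIV. \<xi> $ i * (x $ i - m)) = 0"
      using assms(1) by (simp add: m_def right_diff_distrib sum_subtractf inner_vec_def
          sum_distrib_right[symmetric])
    moreover have "(\<Sum>i\<in>UNIV. \<xi> $ i * (x $ i - m)\<^sup>2)
        = (\<Sum>i\<in>UNIV. x $ i * (\<xi> $ i * (x $ i - m)) - m * (\<xi> $ i * (x $ i - m)))"
      by (intro sum.cong) (simp_all add: power2_eq_square algebra_simps)
    ultimately show ?thesis
      by (simp add: sum_subtractf sum_distrib_left[symmetric] inner_vec_def U_mat_mult_vec_nth m_def)
  qed
  then show ?thesis
    using assms(2) by (simp add: loewner_ge_iff sum_nonneg)
qed

lemma laplacian_gram_eigval_2_pos: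
  fixes A :: "real^'n^'n"
  assumes "\<forall>i j. 0 \<le> A $ i $ j" and irred: "irreducible_mat (laplacian A)"
  shows "0 < eigval 2 (transpose (laplacian A) ** laplacian A)"
proof (rule psd_eigval_2_pos[OF gram_matrix_symmetric gram_matrix_psd])
  show "2 \<le> CARD('n)" using irreducible_mat_card_ge_2[OF irred] .
  fix x :: "real^'n" and i j
  assume "(transpose (laplacian A) ** laplacian A) *v x = 0"
  then have "(laplacian A *v x) \<bullet> (laplacian A *v x) = 0"
    by (metis gram_matrix_quadratic_form inner_zero_right)
  then show "x $ i = x $ j"
    by (intro laplacian_kernel_constant[OF assms]) simp
qed

theorem mainTheorem10:
  fixes A :: "real^'n^'n" and \<xi> :: "real^'n"
  assumes nonneg: "\<forall>i j. 0 \<le> A $ i $ j"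
    and zero_diag: "\<forall>i. A $ i $ i = 0"
    and irred: "irreducible_mat (laplacian A)"
    and xi_pos: "\<forall>i. 0 < \<xi> $ i"
    and xi_left: "\<xi> v* laplacian A = 0"
    and xi_sum: "(\<Sum>i\<in>UNIV. \<xi> $ i) = 1"
  shows
    "loewner_ge (R_mat \<xi> (laplacian A))
       ((eigval 2 (R_mat \<xi> (laplacian A)) / (eigval CARD('n) (U_mat \<xi>))\<^sup>2)
          *\<^sub>R (U_mat \<xi> ** U_mat \<xi>))
   \<and> loewner_ge (transpose (laplacian A) ** laplacian A)
       ((eigval 2 (transpose (laplacian A) ** laplacian A) / (eigval CARD('n) (U_mat \<xi>))\<^sup>2)
          *\<^sub>R (U_mat \<xi> ** U_mat \<xi>))
   \<and> loewner_ge
       ((eigval CARD('n) (R_mat \<xi> (laplacian A)) / eigval 2 (transpose (laplacian A) ** laplacian A))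
          *\<^sub>R (transpose (laplacian A) ** laplacian A))
       (R_mat \<xi> (laplacian A))
   \<and> loewner_ge (R_mat \<xi> (laplacian A))
       ((eigval 2 (R_mat \<xi> (laplacian A)) / spectral_radius (transpose (laplacian A) ** laplacian A))
          *\<^sub>R (transpose (laplacian A) ** laplacian A))"
proof -
  define L R U G where "L = laplacian A" and "R = R_mat \<xi> L" and "U = U_mat \<xi>"
    and "G = transpose L ** L"
  have "2 \<le> CARD('n)" using irreducible_mat_card_ge_2[OF irred] .
  have xi_nonneg: "\<forall>i. 0 \<le> \<xi> $ i" using xi_pos less_imp_le by blast
  have R: "transpose R = R" "R *v 1 = 0" "loewner_ge R 0"
    using R_mat_symmetric R_mat_mult_one[OF xi_left laplacian_mult_one]
      R_mat_laplacian_psd[OF nonneg xi_nonneg xi_left] by (simp_all add: R_def L_def)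
  have U: "transpose U = U" "loewner_ge U 0" and UU: "transpose (U ** U) = U ** U" "(U ** U) *v 1 = 0"
    using U_mat_psd[OF xi_sum xi_nonneg] U_mat_mult_one[OF xi_sum]
    by (simp_all add: U_def U_mat_symmetric matrix_transpose_mul matrix_vector_mul_assoc[symmetric])
  have G: "transpose G = G" "G *v 1 = 0" "loewner_ge G 0"
    by (simp_all add: G_def L_def gram_matrix_symmetric gram_matrix_psd laplacian_mult_one
        matrix_vector_mul_assoc[symmetric] del: transpose_matrix_vector)
  have R_lower: "\<And>y. y \<bullet> 1 = 0 \<Longrightarrow> eigval 2 R * (y \<bullet> y) \<le> y \<bullet> (R *v y)"
    and G_lower: "\<And>y. y \<bullet> 1 = 0 \<Longrightarrow> eigval 2 G * (y \<bullet> y) \<le> y \<bullet> (G *v y)"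
    using psd_eigval_2_le_quadratic_form R G \<open>2 \<le> CARD('n)\<close> by blast+
  have "0 < eigval 2 G"
    unfolding G_def L_def by (rule laplacian_gram_eigval_2_pos[OF nonneg irred])
  then show ?thesis
    unfolding L_def[symmetric] R_def[symmetric] U_def[symmetric] G_def[symmetric]
    using loewner_ge_scaleR_right_of_bounds[OF R(1) UU(1) R(2) UU(2) R_lower
        psd_square_quadratic_form_le_eigval_max[OF U] psd_eigval_2_nonneg[OF R(1,3)]]
      loewner_ge_scaleR_right_of_bounds[OF G(1) UU(1) G(2) UU(2) G_lower
        psd_square_quadratic_form_le_eigval_max[OF U]]
      loewner_ge_scaleR_left_of_bounds[OF G(1) R(1) G(2) R(2) G_lower
        symmetric_quadratic_form_le_eigval_max[OF R(1)] _ psd_eigval_max_nonneg[OF R(1,3)]]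
      loewner_ge_scaleR_right_of_bounds[OF R(1) G(1) R(2) G(2) R_lower
        symmetric_quadratic_form_le_spectral_radius[OF G(1)] psd_eigval_2_nonneg[OF R(1,3)]
        symmetric_spectral_radius_nonneg[OF G(1)]]
    using \<open>2 \<le> CARD('n)\<close> by simp
qed

end
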